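(* Let $P, Q \subseteq \mathbb{R}^7$ be distinct associative $3$-planes. Then $\Theta(P) \cap \Theta(Q) \subseteq \Lambda^2_7$.
   Context: Equip $\mathbb{R}^7$ with its standard inner product, orientation and basis. Let $\varphi = e_{123} - e_{167} - e_{527} - e_{563} - e_{415} - e_{426} - e_{437}$ ($e_{ijk} = e_i\wedge e_j\wedge e_k$), $\psi = \star\varphi = e_{4567} - e_{4523} - e_{4163} - e_{4127} - e_{2637} - e_{1537} - e_{1526}$, and define $\times$ by $\langle u \times v, w \rangle = \varphi(u,v,w)$. A $3$-dimensional subspace is associative if closed under $\times$. For $u,v$: $u\wedge v$ is the 2-form $(a,b)\mapsto \langle u,a\rangle\langle v,b\rangle - \langle u,b\rangle\langle v,a\rangle$; $u\lrcorner\varphi$ is the 2-form $(a,b)\mapsto \varphi(u,a,b)$; $\Psi_{uv}$ is the 2-form $(a,b)\mapsto\psi(u,v,a,b)$. $\Lambda^2_7 = \{u \lrcorner \varphi : u \in \mathbb{R}^7\}$. For associative $P$, $\Theta(P) = \Lambda^2(P) \oplus \Psi(P)$ where $\Lambda^2(P) = \mathrm{Span}\{u\wedge v: u,v\in P\}$ and $\Psi(P) = \mathrm{Span}\{\Psi_{uv} : u,v\in P\}$. *)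

theory Defs
  imports "HOL-Analysis.Analysis"
begin

text \<open>R^7 is modelled as real^7. The standard basis vector e_i (i = 1..7) is the
  coordinate with index (of_nat i :: 7); the map i \<mapsto> of_nat i is a bijection from
  {1..7} onto the index type 7.\<close>

type_synonym vec7 = "real^7"

definition coord :: "vec7 \<Rightarrow> nat \<Rightarrow> real" where
  "coord x i = x $ (of_nat i :: 7)"

definition std_e :: "nat \<Rightarrow> vec7" where
  "std_e i = axis (of_nat i :: 7) 1"

text \<open>The decomposable form e_{i_1} \<and> ... \<and> e_{i_n} evaluated on vectors v_1..v_n
  (determinant convention).\<close>
definition ewedge :: "nat list \<Rightarrow> vec7 list \<Rightarrow> real" where
  "ewedge is vs = (\<Sum>p | p permutes {..<length is}.
      of_int (sign p) * (\<Prod>r<length is. coord (vs ! r) (is ! p r)))"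

definition phi :: "vec7 \<Rightarrow> vec7 \<Rightarrow> vec7 \<Rightarrow> real" where
  "phi u v w = (let e = (\<lambda>i j k. ewedge [i,j,k] [u,v,w]) in
     e 1 2 3 - e 1 6 7 - e 5 2 7 - e 5 6 3 - e 4 1 5 - e 4 2 6 - e 4 3 7)"

definition psi :: "vec7 \<Rightarrow> vec7 \<Rightarrow> vec7 \<Rightarrow> vec7 \<Rightarrow> real" where
  "psi a b c d = (let e = (\<lambda>i j k l. ewedge [i,j,k,l] [a,b,c,d]) in
     e 4 5 6 7 - e 4 5 2 3 - e 4 1 6 3 - e 4 1 2 7 - e 2 6 3 7 - e 1 5 3 7 - e 1 5 2 6)"

definition cross7 :: "vec7 \<Rightarrow> vec7 \<Rightarrow> vec7" where
  "cross7 u v = (THE z. \<forall>w. inner z w = phi u v w)"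

definition associative :: "vec7 set \<Rightarrow> bool" where
  "associative P \<longleftrightarrow> subspace P \<and> dim P = 3 \<and> (\<forall>u\<in>P. \<forall>v\<in>P. cross7 u v \<in> P)"

text \<open>2-forms on R^7 as (bilinear, alternating) functions of two vectors.\<close>
type_synonym form2 = "vec7 \<Rightarrow> vec7 \<Rightarrow> real"

definition wedge2 :: "vec7 \<Rightarrow> vec7 \<Rightarrow> form2" where
  "wedge2 u v = (\<lambda>a b. inner u a * inner v b - inner u b * inner v a)"

definition contr_phi :: "vec7 \<Rightarrow> form2" where
  "contr_phi u = (\<lambda>a b. phi u a b)"

definition Psi2 :: "vec7 \<Rightarrow> vec7 \<Rightarrow> form2" where
  "Psi2 u v = (\<lambda>a b. psi u v a b)"

definition form_span :: "form2 set \<Rightarrow> form2 set" where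
  "form_span S = {\<omega>. \<exists>F c. finite F \<and> F \<subseteq> S \<and> \<omega> = (\<lambda>a b. \<Sum>f\<in>F. c f * f a b)}"

definition Lambda27 :: "form2 set" where
  "Lambda27 = {contr_phi u | u. True}"

definition Lambda2_of :: "vec7 set \<Rightarrow> form2 set" where
  "Lambda2_of P = form_span {wedge2 u v | u v. u \<in> P \<and> v \<in> P}"

definition Psi_of :: "vec7 set \<Rightarrow> form2 set" where
  "Psi_of P = form_span {Psi2 u v | u v. u \<in> P \<and> v \<in> P}"

text \<open>Theta(P) = Lambda^2(P) \<oplus> Psi(P), as the (internal) sum of subspaces.\<close>
definition Theta :: "vec7 set \<Rightarrow> form2 set" where
  "Theta P = {(\<lambda>a b. x a b + y a b) | x y. x \<in> Lambda2_of P \<and> y \<in> Psi_of P}"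

end

theory Submission
  imports Defs
begin

(*
  Write \<iota>\<^sub>u\<phi> for contr_phi u. By \<Psi>\<^sub>u\<^sub>v = u \<and> v - \<iota>\<^sub>u\<^sub>\<times>\<^sub>v\<phi> and the closure of P under \<times>,
  every \<omega> \<in> \<Theta>(P) is \<alpha> + \<iota>\<^sub>w\<phi> with \<alpha> \<in> \<Lambda>\<^sup>2(P) and w \<in> P; likewise \<omega> = \<beta> + \<iota>\<^sub>z\<phi> with
  \<beta> \<in> \<Lambda>\<^sup>2(Q) and z \<in> Q. A 2-form on a 3-space is degenerate, so ker \<alpha> contains P\<^sup>\<bottom> and a line
  of P and has dimension at least 5; so has ker \<beta>, hence ker \<alpha> \<inter> ker \<beta> has dimension at least 3.
  The form \<iota>\<^sub>d\<phi> = \<alpha> - \<beta>, d = z - w, vanishes on it; but for d \<noteq> 0 the kernel of \<iota>\<^sub>d\<phi> is the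
  line through d, since \<bar>d \<times> x\<bar>\<^sup>2 = \<bar>d\<bar>\<^sup>2\<bar>x\<bar>\<^sup>2 - \<langle>d,x\<rangle>\<^sup>2. Hence z = w and \<alpha> = \<beta>. Finally \<alpha>
  lives on (ker \<alpha>)\<^sup>\<bottom> \<subseteq> P \<inter> Q, which is at most a line: independent x, y \<in> P \<inter> Q would,
  together with x \<times> y, span a 3-space inside P \<inter> Q, forcing P = Q. So \<alpha> = 0 and \<omega> = \<iota>\<^sub>w\<phi> \<in> \<Lambda>\<^sup>2\<^sub>7.
*)

section \<open>The forms \<phi>, \<psi> and the cross product in coordinates\<close>

lemma exhaust_7:
  fixes x :: 7
  shows "x = 1 \<or> x = 2 \<or> x = 3 \<or> x = 4 \<or> x = 5 \<or> x = 6 \<or> x = 7"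
proof (induct x)
  case (of_int z)
  then have "z = 0 \<or> z = 1 \<or> z = 2 \<or> z = 3 \<or> z = 4 \<or> z = 5 \<or> z = 6" by fastforce
  then show ?case by auto
qed

lemma UNIV_7: "UNIV = {1, 2, 3, 4, 5, 6, 7::7}"
  using exhaust_7 by auto

lemma sum_7: "sum f (UNIV::7 set) = f 1 + f 2 + f 3 + f 4 + f 5 + f 6 + f 7"
  unfolding UNIV_7 by (simp add: ac_simps)

lemma sum_sign_permutes_lessThan_Suc:
  "(\<Sum>p | p permutes {..<Suc n}. of_int (sign p) * g p) =
   (\<Sum>b\<le>n. \<Sum>q | q permutes {..<n}.
      of_int (sign q) * ((if b = n then 1 else -1) * (g (Transposition.transpose n b \<circ> q) :: real)))"
proof -
  have "{..<Suc n} = insert n {..<n}" "insert n {..<n} = {..n}"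
    by auto
  then have "(\<Sum>p | p permutes {..<Suc n}. of_int (sign p) * g p) =
     (\<Sum>b\<le>n. \<Sum>q | q permutes {..<n}.
        of_int (sign (Transposition.transpose n b \<circ> q)) * g (Transposition.transpose n b \<circ> q))"
    using sum_over_permutations_insert[of "{..<n}" n "\<lambda>p. of_int (sign p) * g p"] by simp
  also have "\<dots> = (\<Sum>b\<le>n. \<Sum>q | q permutes {..<n}.
      of_int (sign q) * ((if b = n then 1 else -1) * g (Transposition.transpose n b \<circ> q)))"
  proof (intro sum.cong refl)
    fix b q
    assume "q \<in> {q. q permutes {..<n}}"
    then have "permutation q"
      by (auto simp: permutation_permutes)
    then show "of_int (sign (Transposition.transpose n b \<circ> q)) * g (Transposition.transpose n b \<circ> q) =
        of_int (sign q) * ((if b = n then 1 else -1) * g (Transposition.transpose n b \<circ> q))"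
      by (simp add: sign_compose permutation_swap_id sign_swap_id)
  qed
  finally show ?thesis .
qed

lemma ewedge3_eq: "ewedge [i,j,k] [u,v,w] =
  coord u i * coord v j * coord w k - coord u i * coord v k * coord w j
 - coord u j * coord v i * coord w k + coord u j * coord v k * coord w i
 + coord u k * coord v i * coord w j - coord u k * coord v j * coord w i"
  unfolding ewedge_def
  by (simp only: length_Cons list.size numeral_3_eq_3 sum_sign_permutes_lessThan_Suc One_nat_def add_0 Suc_eq_plus1[symmetric])
    (simp add: atMost_Suc permutes_empty Transposition.transpose_def)

lemma ewedge4_eq: "ewedge [i,j,k,l] [a,b,c,d] =
    coord a i * coord b j * coord c k * coord d l - coord a i * coord b j * coord c l * coord d k - coord a i * coord b k * coord c j * coord d l + coord a i * coord b k * coord c l * coord d j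
  + coord a i * coord b l * coord c j * coord d k - coord a i * coord b l * coord c k * coord d j - coord a j * coord b i * coord c k * coord d l + coord a j * coord b i * coord c l * coord d k
  + coord a j * coord b k * coord c i * coord d l - coord a j * coord b k * coord c l * coord d i - coord a j * coord b l * coord c i * coord d k + coord a j * coord b l * coord c k * coord d i
  + coord a k * coord b i * coord c j * coord d l - coord a k * coord b i * coord c l * coord d j - coord a k * coord b j * coord c i * coord d l + coord a k * coord b j * coord c l * coord d i
  + coord a k * coord b l * coord c i * coord d j - coord a k * coord b l * coord c j * coord d i - coord a l * coord b i * coord c j * coord d k + coord a l * coord b i * coord c k * coord d j
  + coord a l * coord b j * coord c i * coord d k - coord a l * coord b j * coord c k * coord d i - coord a l * coord b k * coord c i * coord d j + coord a l * coord b k * coord c j * coord d i"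
  unfolding ewedge_def
  by (simp only: length_Cons list.size sum_sign_permutes_lessThan_Suc One_nat_def add_0 Suc_eq_plus1[symmetric])
    (simp add: atMost_Suc permutes_empty Transposition.transpose_def)

lemma phi_expand: "phi u v w =
    (u$1 * v$2 * w$3 - u$1 * v$3 * w$2 - u$2 * v$1 * w$3 + u$2 * v$3 * w$1 + u$3 * v$1 * w$2 - u$3 * v$2 * w$1)
  - (u$1 * v$6 * w$7 - u$1 * v$7 * w$6 - u$6 * v$1 * w$7 + u$6 * v$7 * w$1 + u$7 * v$1 * w$6 - u$7 * v$6 * w$1)
  - (u$5 * v$2 * w$7 - u$5 * v$7 * w$2 - u$2 * v$5 * w$7 + u$2 * v$7 * w$5 + u$7 * v$5 * w$2 - u$7 * v$2 * w$5)
  - (u$5 * v$6 * w$3 - u$5 * v$3 * w$6 - u$6 * v$5 * w$3 + u$6 * v$3 * w$5 + u$3 * v$5 * w$6 - u$3 * v$6 * w$5)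
  - (u$4 * v$1 * w$5 - u$4 * v$5 * w$1 - u$1 * v$4 * w$5 + u$1 * v$5 * w$4 + u$5 * v$4 * w$1 - u$5 * v$1 * w$4)
  - (u$4 * v$2 * w$6 - u$4 * v$6 * w$2 - u$2 * v$4 * w$6 + u$2 * v$6 * w$4 + u$6 * v$4 * w$2 - u$6 * v$2 * w$4)
  - (u$4 * v$3 * w$7 - u$4 * v$7 * w$3 - u$3 * v$4 * w$7 + u$3 * v$7 * w$4 + u$7 * v$4 * w$3 - u$7 * v$3 * w$4)"
  unfolding phi_def Let_def ewedge3_eq by (simp add: coord_def of_nat_numeral)

lemma inner_vec_phi_axis: "(\<chi> k. phi u v (axis k 1)) \<bullet> w = phi u v w"
  unfolding inner_vec_def sum_7 phi_expand by (simp add: axis_def algebra_simps)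

lemma cross7_eq: "cross7 u v = (\<chi> k. phi u v (axis k 1))"
  unfolding cross7_def
proof (rule the_equality)
  fix z
  assume "\<forall>w. z \<bullet> w = phi u v w"
  then have "(z - (\<chi> k. phi u v (axis k 1))) \<bullet> w = 0" for w
    by (simp add: inner_diff_left inner_vec_phi_axis)
  then show "z = (\<chi> k. phi u v (axis k 1))"
    by (metis eq_iff_diff_eq_0 inner_eq_zero_iff)
qed (simp add: inner_vec_phi_axis)

lemma inner_cross7: "cross7 u v \<bullet> w = phi u v w"
  by (simp add: cross7_eq inner_vec_phi_axis)

lemma psi_eq_wedge2_minus_phi_cross7: "psi u v a b = wedge2 u v a b - phi (cross7 u v) a b"
  unfolding psi_def Let_def ewedge4_eq wedge2_def phi_expand[of "cross7 u v"]
  unfolding cross7_eq phi_expand inner_vec_def sum_7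
  by (simp add: coord_def of_nat_numeral axis_def algebra_simps)

lemma inner_cross7_self: "cross7 u v \<bullet> cross7 u v = (u \<bullet> u) * (v \<bullet> v) - (u \<bullet> v)\<^sup>2"
  unfolding cross7_eq inner_vec_def sum_7 phi_expand
  by (simp add: axis_def algebra_simps power2_eq_square)

lemma phi_swap12: "phi v u w = - phi u v w"
  unfolding phi_expand by (simp add: algebra_simps)

lemma phi_swap23: "phi u w v = - phi u v w"
  unfolding phi_expand by (simp add: algebra_simps)

lemma linear_phi: "linear (\<lambda>u. phi u a b)"
  by (rule linearI) (simp_all add: phi_expand algebra_simps)

lemma cross7_orthogonal_left: "cross7 u v \<bullet> u = 0"
  using phi_swap23[of u v u] phi_swap12[of u u v] by (simp add: inner_cross7)

lemma cross7_orthogonal_right: "cross7 u v \<bullet> v = 0"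
  using phi_swap23[of u v v] by (simp add: inner_cross7)

section \<open>Orthogonal complements\<close>

lemma dim_orthogonal_comp:
  fixes U :: "'a::euclidean_space set"
  assumes "subspace U"
  shows "dim (U\<^sup>\<bottom>) + dim U = DIM('a)"
proof -
  have "dim {y \<in> UNIV. \<forall>x \<in> U. orthogonal x y} + dim U = dim (UNIV :: 'a set)"
    by (rule dim_subspace_orthogonal_to_vectors) (use assms in auto)
  then show ?thesis
    by (simp add: orthogonal_comp_def)
qed

lemma linear_eq_0_on_subspace_and_orthogonal_comp:
  fixes U :: "'a::euclidean_space set"
  assumes "linear f" "subspace U" "\<And>u. u \<in> U \<Longrightarrow> f u = 0" "\<And>v. v \<in> U\<^sup>\<bottom> \<Longrightarrow> f v = 0"
  shows "f x = 0"
proof -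
  obtain u v where "x = u + v" "u \<in> U" "v \<in> U\<^sup>\<bottom>"
    using subspace_sum_orthogonal_comp[OF assms(2)] by (blast elim: set_plus_elim)
  then show ?thesis
    using assms by (simp add: linear_add)
qed

lemma subspace_dim_le_1_iff:
  fixes W :: "'a::euclidean_space set"
  assumes "subspace W"
  shows "dim W \<le> 1 \<longleftrightarrow> (\<forall>x \<in> W. x \<noteq> 0 \<longrightarrow> W \<subseteq> span {x})"
proof
  assume dim: "dim W \<le> 1"
  show "\<forall>x \<in> W. x \<noteq> 0 \<longrightarrow> W \<subseteq> span {x}"
  proof (intro ballI impI)
    fix x
    assume "x \<in> W" "x \<noteq> 0"
    then have "span {x} \<subseteq> W" "dim W \<le> dim (span {x})"
      using assms dim by (simp_all add: span_minimal dim_insert)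
    then show "W \<subseteq> span {x}"
      using subspace_dim_equal[of "span {x}" W] assms by auto
  qed
next
  assume lines: "\<forall>x \<in> W. x \<noteq> 0 \<longrightarrow> W \<subseteq> span {x}"
  show "dim W \<le> 1"
  proof (cases "W \<subseteq> {0}")
    case True
    then show ?thesis
      by (metis dim_eq_0 zero_le_one)
  next
    case False
    then obtain x where "x \<in> W" "x \<noteq> 0"
      by blast
    then have "dim W \<le> dim (span {x})"
      using lines dim_subset by blast
    also have "\<dots> \<le> 1"
      by (simp add: dim_insert)
    finally show ?thesis .
  qed
qed

section \<open>Alternating forms supported on a subspace\<close>

(* alt_form_on P \<alpha> says \<alpha> \<in> \<Lambda>\<^sup>2(P): \<alpha> is a 2-form that depends only on the orthogonal
  projections of its arguments onto P. *)

definition alt_form_on :: "'a::real_inner set \<Rightarrow> ('a \<Rightarrow> 'a \<Rightarrow> real) \<Rightarrow> bool" where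
  "alt_form_on P \<alpha> \<longleftrightarrow>
     (\<forall>b. linear (\<lambda>a. \<alpha> a b)) \<and> (\<forall>a b. \<alpha> b a = - \<alpha> a b) \<and> (\<forall>a \<in> P\<^sup>\<bottom>. \<forall>b. \<alpha> a b = 0)"

definition form_kernel :: "('a \<Rightarrow> 'a \<Rightarrow> real) \<Rightarrow> 'a set" where
  "form_kernel \<alpha> = {a. \<forall>b. \<alpha> a b = 0}"

lemma alt_form_onI:
  assumes "\<And>b. linear (\<lambda>a. \<alpha> a b)" "\<And>a b. \<alpha> b a = - \<alpha> a b" "\<And>a b. a \<in> P\<^sup>\<bottom> \<Longrightarrow> \<alpha> a b = 0"
  shows "alt_form_on P \<alpha>"
  unfolding alt_form_on_def using assms by blast

lemma alt_form_on_linear_left: "alt_form_on P \<alpha> \<Longrightarrow> linear (\<lambda>a. \<alpha> a b)"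
  unfolding alt_form_on_def by blast

lemma alt_form_on_antisym: "alt_form_on P \<alpha> \<Longrightarrow> \<alpha> b a = - \<alpha> a b"
  unfolding alt_form_on_def by blast

lemma alt_form_on_orthogonal_left: "alt_form_on P \<alpha> \<Longrightarrow> a \<in> P\<^sup>\<bottom> \<Longrightarrow> \<alpha> a b = 0"
  unfolding alt_form_on_def by blast

lemma alt_form_on_orthogonal_right: "alt_form_on P \<alpha> \<Longrightarrow> b \<in> P\<^sup>\<bottom> \<Longrightarrow> \<alpha> a b = 0"
  using alt_form_on_antisym[of P \<alpha> a b] alt_form_on_orthogonal_left[of P \<alpha> b a] by simp

lemma alt_form_on_self: "alt_form_on P \<alpha> \<Longrightarrow> \<alpha> a a = 0"
  using alt_form_on_antisym[of P \<alpha> a a] by simp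

lemma alt_form_on_linear_right:
  assumes "alt_form_on P \<alpha>"
  shows "linear (\<alpha> a)"
proof -
  have "\<alpha> a = (\<lambda>b. - \<alpha> b a)"
    using alt_form_on_antisym[OF assms, of _ a] by (intro ext) simp
  then show ?thesis
    using linear_compose_neg[OF alt_form_on_linear_left[OF assms]] by simp
qed

lemma alt_form_on_zero: "alt_form_on P (\<lambda>a b. 0)"
  by (rule alt_form_onI) (simp_all add: linear_zero)

lemma alt_form_on_add:
  assumes "alt_form_on P \<alpha>" "alt_form_on P \<beta>"
  shows "alt_form_on P (\<lambda>a b. \<alpha> a b + \<beta> a b)"
proof (rule alt_form_onI)
  show "linear (\<lambda>a. \<alpha> a b + \<beta> a b)" for b
    using linear_compose_add[OF alt_form_on_linear_left[OF assms(1)] alt_form_on_linear_left[OF assms(2)]]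
    by simp
  show "\<alpha> b a + \<beta> b a = - (\<alpha> a b + \<beta> a b)" for a b
    using alt_form_on_antisym[OF assms(1), of b a] alt_form_on_antisym[OF assms(2), of b a] by simp
  show "\<alpha> a b + \<beta> a b = 0" if "a \<in> P\<^sup>\<bottom>" for a b
    using alt_form_on_orthogonal_left[OF assms(1) that] alt_form_on_orthogonal_left[OF assms(2) that]
    by simp
qed

lemma alt_form_on_scale:
  assumes "alt_form_on P \<alpha>"
  shows "alt_form_on P (\<lambda>a b. c * \<alpha> a b)"
proof (rule alt_form_onI)
  show "linear (\<lambda>a. c * \<alpha> a b)" for b
    using linear_compose_scale_right[OF alt_form_on_linear_left[OF assms]] by simp
  show "c * \<alpha> b a = - (c * \<alpha> a b)" for a b
    using alt_form_on_antisym[OF assms, of b a] by simp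
  show "c * \<alpha> a b = 0" if "a \<in> P\<^sup>\<bottom>" for a b
    using alt_form_on_orthogonal_left[OF assms that] by simp
qed

lemma alt_form_on_wedge2:
  assumes "u \<in> P" "v \<in> P"
  shows "alt_form_on P (wedge2 u v)"
proof (rule alt_form_onI)
  show "linear (\<lambda>a. wedge2 u v a b)" for b
    by (rule linearI) (simp_all add: wedge2_def inner_add_right algebra_simps)
  show "wedge2 u v b a = - wedge2 u v a b" for a b
    by (simp add: wedge2_def)
  show "wedge2 u v a b = 0" if "a \<in> P\<^sup>\<bottom>" for a b
    using that assms by (simp add: wedge2_def orthogonal_comp_def orthogonal_def)
qed

lemma subspace_form_kernel:
  assumes "alt_form_on P \<alpha>"
  shows "subspace (form_kernel \<alpha>)"
  using linear_add[OF alt_form_on_linear_left[OF assms]] linear_scale[OF alt_form_on_linear_left[OF assms]]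
    linear_0[OF alt_form_on_linear_left[OF assms]]
  by (simp add: subspace_def form_kernel_def)

lemma orthogonal_comp_subset_form_kernel: "alt_form_on P \<alpha> \<Longrightarrow> P\<^sup>\<bottom> \<subseteq> form_kernel \<alpha>"
  by (auto simp: form_kernel_def alt_form_on_orthogonal_left)

lemma alt_form_on_in_form_kernel:
  fixes P :: "'a::euclidean_space set"
  assumes "alt_form_on P \<alpha>" "subspace P" "\<And>p. p \<in> P \<Longrightarrow> \<alpha> k p = 0"
  shows "k \<in> form_kernel \<alpha>"
  unfolding form_kernel_def
  using linear_eq_0_on_subspace_and_orthogonal_comp[OF alt_form_on_linear_right[OF assms(1)] assms(2)]
    assms(3) alt_form_on_orthogonal_right[OF assms(1)]
  by blast

lemma alt_form_on_dim_3_form_kernel_nonzero: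
  fixes P :: "'a::euclidean_space set"
  assumes "subspace P" "dim P = 3" "alt_form_on P \<alpha>"
  obtains k where "k \<in> P" "k \<noteq> 0" "k \<in> form_kernel \<alpha>"
proof -
  obtain B where "B \<subseteq> P" "pairwise orthogonal B" "\<And>x. x \<in> B \<Longrightarrow> norm x = 1"
    "card B = dim P" "span B = P"
    using orthonormal_basis_subspace[OF assms(1)] by metis
  then obtain p1 p2 p3 where B: "B = {p1, p2, p3}" "p1 \<noteq> p2" "p2 \<noteq> p3" "p1 \<noteq> p3"
    and p: "p1 \<in> P" "p2 \<in> P" "p3 \<in> P"
    and unit: "p1 \<bullet> p1 = 1" "p2 \<bullet> p2 = 1" "p3 \<bullet> p3 = 1"
    and orth: "p1 \<bullet> p2 = 0" "p1 \<bullet> p3 = 0" "p2 \<bullet> p3 = 0"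
    using assms(2) by (auto simp: card_3_iff pairwise_def orthogonal_def norm_eq_1)
  have in_kernel: "k \<in> form_kernel \<alpha>" if "\<alpha> k p1 = 0" "\<alpha> k p2 = 0" "\<alpha> k p3 = 0" for k
  proof (rule alt_form_on_in_form_kernel[OF assms(3,1)])
    fix p
    assume "p \<in> P"
    then have "p \<in> span B"
      using \<open>span B = P\<close> by simp
    then show "\<alpha> k p = 0"
      using linear_eq_0_on_span[OF alt_form_on_linear_right[OF assms(3)], of B k p] that B(1)
      by blast
  qed
  note antisym = alt_form_on_antisym[OF assms(3)] and self = alt_form_on_self[OF assms(3)]
  show ?thesis
  proof (cases "\<alpha> p1 p2 = 0 \<and> \<alpha> p1 p3 = 0 \<and> \<alpha> p2 p3 = 0")
    case True
    then have "p1 \<in> form_kernel \<alpha>"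
      by (intro in_kernel) (simp_all add: self)
    moreover have "p1 \<noteq> 0"
      using unit by auto
    ultimately show ?thesis
      using that p by blast
  next
    case False
    \<comment> \<open>the Hodge dual of \<alpha> on the 3-space P\<close>
    define k where "k = \<alpha> p2 p3 *\<^sub>R p1 - \<alpha> p1 p3 *\<^sub>R p2 + \<alpha> p1 p2 *\<^sub>R p3"
    have "k \<in> P"
      unfolding k_def using p assms(1) by (simp add: subspace_add subspace_diff subspace_scale)
    have "k \<bullet> p1 = \<alpha> p2 p3" "k \<bullet> p2 = - \<alpha> p1 p3" "k \<bullet> p3 = \<alpha> p1 p2"
      unfolding k_def using unit orth by (simp_all add: inner_commute algebra_simps)
    then have "k \<noteq> 0"
      using False by auto
    have k_left: "\<alpha> k p = \<alpha> p2 p3 * \<alpha> p1 p - \<alpha> p1 p3 * \<alpha> p2 p + \<alpha> p1 p2 * \<alpha> p3 p" for p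
      using linear_add[OF alt_form_on_linear_left[OF assms(3)]] linear_diff[OF alt_form_on_linear_left[OF assms(3)]]
        linear_scale[OF alt_form_on_linear_left[OF assms(3)]]
      by (simp add: k_def)
    have "k \<in> form_kernel \<alpha>"
      by (intro in_kernel, unfold k_left)
        (simp_all add: antisym[of p1 p2] antisym[of p1 p3] antisym[of p2 p3] self algebra_simps)
    with \<open>k \<in> P\<close> \<open>k \<noteq> 0\<close> show ?thesis
      using that by blast
  qed
qed

lemma dim_form_kernel_ge:
  fixes P :: "'a::euclidean_space set"
  assumes "subspace P" "dim P = 3" "alt_form_on P \<alpha>"
  shows "DIM('a) - 2 \<le> dim (form_kernel \<alpha>)"
proof -
  obtain k where k: "k \<in> P" "k \<noteq> 0" "k \<in> form_kernel \<alpha>"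
    using alt_form_on_dim_3_form_kernel_nonzero[OF assms] .
  have "k \<notin> span (P\<^sup>\<bottom>)"
    using k orthogonal_Int_0[OF assms(1)] span_eq_iff[THEN iffD2, OF subspace_orthogonal_comp]
    by blast
  then have "dim (insert k (P\<^sup>\<bottom>)) = dim (P\<^sup>\<bottom>) + 1"
    by (simp add: dim_insert)
  also have "\<dots> = DIM('a) - 2"
    using dim_orthogonal_comp[OF assms(1)] assms(2) by simp
  finally have "dim (insert k (P\<^sup>\<bottom>)) = DIM('a) - 2" .
  moreover have "insert k (P\<^sup>\<bottom>) \<subseteq> form_kernel \<alpha>"
    using k orthogonal_comp_subset_form_kernel[OF assms(3)] by blast
  ultimately show ?thesis
    using dim_subset[of "insert k (P\<^sup>\<bottom>)" "form_kernel \<alpha>"] by simp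
qed

lemma orthogonal_comp_form_kernel_subset:
  fixes P :: "'a::euclidean_space set"
  assumes "subspace P" "alt_form_on P \<alpha>"
  shows "(form_kernel \<alpha>)\<^sup>\<bottom> \<subseteq> P"
  using orthogonal_comp_anti_mono[OF orthogonal_comp_subset_form_kernel[OF assms(2)]]
  by (simp add: orthogonal_comp_self[OF assms(1)])

lemma alt_form_on_orthogonal_comp_form_kernel:
  fixes \<alpha> :: "'a::euclidean_space \<Rightarrow> 'a \<Rightarrow> real"
  assumes "alt_form_on P \<alpha>"
  shows "alt_form_on ((form_kernel \<alpha>)\<^sup>\<bottom>) \<alpha>"
proof (rule alt_form_onI)
  show "linear (\<lambda>a. \<alpha> a b)" "\<alpha> b a = - \<alpha> a b" for a b
    using assms by (rule alt_form_on_linear_left, rule alt_form_on_antisym)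
  show "\<alpha> a b = 0" if "a \<in> (form_kernel \<alpha>)\<^sup>\<bottom>\<^sup>\<bottom>" for a b
    using that orthogonal_comp_self[OF subspace_form_kernel[OF assms]] by (simp add: form_kernel_def)
qed

lemma alt_form_on_dim_le_1_eq_0:
  fixes W :: "'a::euclidean_space set"
  assumes "subspace W" "dim W \<le> 1" "alt_form_on W \<alpha>"
  shows "\<alpha> a b = 0"
proof -
  have "\<alpha> x y = 0" if "x \<in> W" "y \<in> W" for x y
  proof (cases "x = 0")
    case True
    then show ?thesis
      using linear_0[OF alt_form_on_linear_left[OF assms(3)]] by simp
  next
    case False
    then have "y \<in> span {x}"
      using subspace_dim_le_1_iff[OF assms(1)] assms(2) \<open>x \<in> W\<close> \<open>y \<in> W\<close> False by blast
    then obtain t where "y = t *\<^sub>R x"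
      by (auto simp: span_singleton)
    then show ?thesis
      using linear_scale[OF alt_form_on_linear_right[OF assms(3)]] alt_form_on_self[OF assms(3)]
      by simp
  qed
  then have "W \<subseteq> form_kernel \<alpha>"
    using alt_form_on_in_form_kernel[OF assms(3,1)] by blast
  show ?thesis
  proof (rule linear_eq_0_on_subspace_and_orthogonal_comp[OF alt_form_on_linear_left[OF assms(3)] assms(1)])
    show "\<alpha> u b = 0" if "u \<in> W" for u
      using \<open>W \<subseteq> form_kernel \<alpha>\<close> that by (auto simp: form_kernel_def)
    show "\<alpha> v b = 0" if "v \<in> W\<^sup>\<bottom>" for v
      using alt_form_on_orthogonal_left[OF assms(3) that] .
  qed
qed

lemma alt_form_on_two_subspaces_eq_0:
  fixes P Q :: "'a::euclidean_space set"
  assumes "subspace P" "subspace Q" "dim (P \<inter> Q) \<le> 1" "alt_form_on P \<alpha>" "alt_form_on Q \<alpha>"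
  shows "\<alpha> a b = 0"
proof -
  have "(form_kernel \<alpha>)\<^sup>\<bottom> \<subseteq> P \<inter> Q"
    using orthogonal_comp_form_kernel_subset[OF assms(1,4)] orthogonal_comp_form_kernel_subset[OF assms(2,5)]
    by blast
  with assms(3) have "dim ((form_kernel \<alpha>)\<^sup>\<bottom>) \<le> 1"
    using dim_subset[of "(form_kernel \<alpha>)\<^sup>\<bottom>" "P \<inter> Q"] by simp
  then show ?thesis
    using alt_form_on_dim_le_1_eq_0[OF subspace_orthogonal_comp]
      alt_form_on_orthogonal_comp_form_kernel[OF assms(4)]
    by blast
qed

section \<open>Associative planes\<close>

lemma cross7_eq_0_imp_in_span:
  assumes "d \<noteq> 0" "cross7 d x = 0"
  shows "x \<in> span {d}"
proof -
  define t where "t = (d \<bullet> x) / (d \<bullet> d)"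
  have lagrange: "(d \<bullet> d) * (x \<bullet> x) = (d \<bullet> x)\<^sup>2"
    using inner_cross7_self[of d x] assms(2) by simp
  have "d \<bullet> d \<noteq> 0"
    using assms(1) by simp
  then have "(x - t *\<^sub>R d) \<bullet> (x - t *\<^sub>R d) = 0"
    using lagrange
    by (simp add: t_def inner_diff_left inner_diff_right inner_commute field_simps power2_eq_square)
  then have "x = t *\<^sub>R d"
    by simp
  then show ?thesis
    by (simp add: span_mul span_base)
qed

lemma form_kernel_contr_phi_subset:
  assumes "d \<noteq> 0"
  shows "form_kernel (contr_phi d) \<subseteq> span {d}"
proof
  fix x
  assume "x \<in> form_kernel (contr_phi d)"
  then have "cross7 d x \<bullet> cross7 d x = 0"
    by (simp add: form_kernel_def contr_phi_def inner_cross7)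
  then show "x \<in> span {d}"
    using cross7_eq_0_imp_in_span[OF assms] by simp
qed

lemma associative_inter_dim_le_1:
  assumes P: "associative P" and Q: "associative Q" and "P \<noteq> Q"
  shows "dim (P \<inter> Q) \<le> 1"
proof -
  have "subspace P" "subspace Q" "dim P = 3" "dim Q = 3"
    using P Q by (simp_all add: associative_def)
  have "P \<inter> Q \<subseteq> span {x}" if x: "x \<in> P \<inter> Q" "x \<noteq> 0" for x
  proof (rule ccontr)
    assume "\<not> P \<inter> Q \<subseteq> span {x}"
    then obtain y where y: "y \<in> P \<inter> Q" "y \<notin> span {x}"
      by blast
    define c where "c = cross7 x y"
    have "c \<in> P \<inter> Q"
      using P Q x y by (simp add: c_def associative_def)
    have "c \<noteq> 0"
      using cross7_eq_0_imp_in_span[OF \<open>x \<noteq> 0\<close>] y by (auto simp: c_def)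
    have "c \<notin> span {y, x}"
    proof
      assume "c \<in> span {y, x}"
      then have "orthogonal c c"
        by (rule orthogonal_to_span)
          (auto simp: c_def orthogonal_def cross7_orthogonal_left cross7_orthogonal_right)
      with \<open>c \<noteq> 0\<close> show False
        by (simp add: orthogonal_def)
    qed
    then have "dim {c, y, x} = 3"
      using y x by (simp add: dim_insert)
    moreover have "{c, y, x} \<subseteq> P \<inter> Q"
      using \<open>c \<in> P \<inter> Q\<close> x y by blast
    ultimately have "3 \<le> dim (P \<inter> Q)"
      using dim_subset[of "{c, y, x}" "P \<inter> Q"] by simp
    moreover have "subspace (P \<inter> Q)"
      using \<open>subspace P\<close> \<open>subspace Q\<close> by (rule subspace_inter)
    ultimately have "P \<inter> Q = P" "P \<inter> Q = Q"
      using subspace_dim_equal[of "P \<inter> Q" P] subspace_dim_equal[of "P \<inter> Q" Q]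
        \<open>subspace P\<close> \<open>subspace Q\<close> \<open>dim P = 3\<close> \<open>dim Q = 3\<close>
      by auto
    with \<open>P \<noteq> Q\<close> show False
      by simp
  qed
  then show ?thesis
    using subspace_dim_le_1_iff[OF subspace_inter[OF \<open>subspace P\<close> \<open>subspace Q\<close>]] by blast
qed

section \<open>The spaces \<Theta>(P)\<close>

lemma form_span_subset:
  assumes "S \<subseteq> C" "(\<lambda>a b. 0) \<in> C"
    and add: "\<And>f g. f \<in> C \<Longrightarrow> g \<in> C \<Longrightarrow> (\<lambda>a b. f a b + g a b) \<in> C"
    and scale: "\<And>c f. f \<in> C \<Longrightarrow> (\<lambda>a b. c * f a b) \<in> C"
  shows "form_span S \<subseteq> C"
proof
  fix \<omega>
  assume "\<omega> \<in> form_span S"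
  then obtain F c where "finite F" "F \<subseteq> S" and \<omega>: "\<omega> = (\<lambda>a b. \<Sum>f\<in>F. c f * f a b)"
    by (auto simp: form_span_def)
  have "(\<lambda>a b. \<Sum>f\<in>F. c f * f a b) \<in> C"
    using \<open>finite F\<close> \<open>F \<subseteq> S\<close>
  proof (induction F rule: finite_induct)
    case empty
    then show ?case
      using assms(2) by simp
  next
    case (insert f F)
    then have "f \<in> C" "(\<lambda>a b. \<Sum>g\<in>F. c g * g a b) \<in> C"
      using assms(1) by auto
    then have "(\<lambda>a b. c f * f a b + (\<Sum>g\<in>F. c g * g a b)) \<in> C"
      by (rule add[OF scale])
    with insert show ?case
      by simp
  qed
  with \<omega> show "\<omega> \<in> C"
    by simp
qed

(* \<Lambda>\<^sup>2(P) + \<iota>\<^sub>P\<phi>, which contains \<Theta>(P) because \<Psi>\<^sub>u\<^sub>v = u \<and> v - \<iota>\<^sub>u\<^sub>\<times>\<^sub>v\<phi>. *)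

definition Lambda2_plus_phi :: "vec7 set \<Rightarrow> form2 set" where
  "Lambda2_plus_phi P = {(\<lambda>a b. \<alpha> a b + phi w a b) | \<alpha> w. alt_form_on P \<alpha> \<and> w \<in> P}"

lemma Theta_subset_Lambda2_plus_phi:
  assumes "associative P"
  shows "Theta P \<subseteq> Lambda2_plus_phi P"
proof -
  have "subspace P" and cross_closed: "\<And>u v. u \<in> P \<Longrightarrow> v \<in> P \<Longrightarrow> cross7 u v \<in> P"
    using assms by (auto simp: associative_def)
  note phi_linear = linear_add[OF linear_phi] linear_scale[OF linear_phi]
    linear_neg[OF linear_phi] linear_0[OF linear_phi]
  have add: "(\<lambda>a b. f a b + g a b) \<in> Lambda2_plus_phi P"
    if f: "f \<in> Lambda2_plus_phi P" and g: "g \<in> Lambda2_plus_phi P" for f g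
  proof -
    obtain \<alpha> w where "alt_form_on P \<alpha>" "w \<in> P" "f = (\<lambda>a b. \<alpha> a b + phi w a b)"
      using f unfolding Lambda2_plus_phi_def by blast
    moreover obtain \<beta> z where "alt_form_on P \<beta>" "z \<in> P" "g = (\<lambda>a b. \<beta> a b + phi z a b)"
      using g unfolding Lambda2_plus_phi_def by blast
    ultimately show ?thesis
      unfolding Lambda2_plus_phi_def
      by (intro CollectI exI[of _ "\<lambda>a b. \<alpha> a b + \<beta> a b"] exI[of _ "w + z"])
        (auto simp: alt_form_on_add subspace_add[OF \<open>subspace P\<close>] phi_linear algebra_simps)
  qed
  have scale: "(\<lambda>a b. c * f a b) \<in> Lambda2_plus_phi P" if f: "f \<in> Lambda2_plus_phi P" for c f
  proof -
    obtain \<alpha> w where "alt_form_on P \<alpha>" "w \<in> P" "f = (\<lambda>a b. \<alpha> a b + phi w a b)"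
      using f unfolding Lambda2_plus_phi_def by blast
    then show ?thesis
      unfolding Lambda2_plus_phi_def
      by (intro CollectI exI[of _ "\<lambda>a b. c * \<alpha> a b"] exI[of _ "c *\<^sub>R w"])
        (auto simp: alt_form_on_scale subspace_scale[OF \<open>subspace P\<close>] phi_linear algebra_simps)
  qed
  have zero: "(\<lambda>a b. 0) \<in> Lambda2_plus_phi P"
    unfolding Lambda2_plus_phi_def
    using alt_form_on_zero subspace_0[OF \<open>subspace P\<close>] by (force simp: phi_linear)
  have "wedge2 u v \<in> Lambda2_plus_phi P" if "u \<in> P" "v \<in> P" for u v
    unfolding Lambda2_plus_phi_def
    using alt_form_on_wedge2[OF that] subspace_0[OF \<open>subspace P\<close>] by (force simp: phi_linear)
  then have "Lambda2_of P \<subseteq> Lambda2_plus_phi P"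
    unfolding Lambda2_of_def by (intro form_span_subset zero add scale) auto
  have "Psi2 u v \<in> Lambda2_plus_phi P" if "u \<in> P" "v \<in> P" for u v
    unfolding Lambda2_plus_phi_def
    using alt_form_on_wedge2[OF that] subspace_neg[OF \<open>subspace P\<close> cross_closed[OF that]]
    by (force simp: Psi2_def psi_eq_wedge2_minus_phi_cross7 phi_linear)
  then have "Psi_of P \<subseteq> Lambda2_plus_phi P"
    unfolding Psi_of_def by (intro form_span_subset zero add scale) auto
  then show ?thesis
    using \<open>Lambda2_of P \<subseteq> Lambda2_plus_phi P\<close> add by (auto simp: Theta_def)
qed

lemma phi_eq_diff_alt_forms_imp_0:
  assumes P: "subspace P" "dim P = 3" "alt_form_on P \<alpha>"
    and Q: "subspace Q" "dim Q = 3" "alt_form_on Q \<beta>"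
    and diff: "\<And>a b. \<alpha> a b - \<beta> a b = phi d a b"
  shows "d = 0"
proof (rule ccontr)
  assume "d \<noteq> 0"
  let ?K\<alpha> = "form_kernel \<alpha>" and ?K\<beta> = "form_kernel \<beta>"
  have "?K\<alpha> \<inter> ?K\<beta> \<subseteq> form_kernel (contr_phi d)"
    by (auto simp: form_kernel_def contr_phi_def simp flip: diff)
  then have "dim (?K\<alpha> \<inter> ?K\<beta>) \<le> dim (span {d})"
    using form_kernel_contr_phi_subset[OF \<open>d \<noteq> 0\<close>] dim_subset[of "?K\<alpha> \<inter> ?K\<beta>" "span {d}"]
    by blast
  then have "dim (?K\<alpha> \<inter> ?K\<beta>) \<le> 1"
    using \<open>d \<noteq> 0\<close> by (simp add: dim_insert)
  moreover have "dim {x + y |x y. x \<in> ?K\<alpha> \<and> y \<in> ?K\<beta>} \<le> 7"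
    using dim_subset_UNIV[of "{x + y |x y. x \<in> ?K\<alpha> \<and> y \<in> ?K\<beta>}"] by simp
  moreover have "dim {x + y |x y. x \<in> ?K\<alpha> \<and> y \<in> ?K\<beta>} + dim (?K\<alpha> \<inter> ?K\<beta>) = dim ?K\<alpha> + dim ?K\<beta>"
    using dim_sums_Int subspace_form_kernel P(3) Q(3) by blast
  moreover have "5 \<le> dim ?K\<alpha>" "5 \<le> dim ?K\<beta>"
    using dim_form_kernel_ge[OF P] dim_form_kernel_ge[OF Q] by simp_all
  ultimately show False
    by linarith
qed

theorem proposition4p12:
  fixes P Q :: "vec7 set"
  assumes "associative P" and "associative Q" and "P \<noteq> Q"
  shows "Theta P \<inter> Theta Q \<subseteq> Lambda27"
proof
  fix \<omega>
  assume "\<omega> \<in> Theta P \<inter> Theta Q"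
  then obtain \<alpha> w \<beta> z where
    \<alpha>: "alt_form_on P \<alpha>" "w \<in> P" "\<omega> = (\<lambda>a b. \<alpha> a b + phi w a b)" and
    \<beta>: "alt_form_on Q \<beta>" "z \<in> Q" "\<omega> = (\<lambda>a b. \<beta> a b + phi z a b)"
    using Theta_subset_Lambda2_plus_phi[OF assms(1)] Theta_subset_Lambda2_plus_phi[OF assms(2)]
    unfolding Lambda2_plus_phi_def by blast
  have "subspace P" "dim P = 3" "subspace Q" "dim Q = 3"
    using assms by (simp_all add: associative_def)
  have "\<alpha> a b + phi w a b = \<beta> a b + phi z a b" for a b
    using \<alpha>(3) \<beta>(3) by metis
  then have diff: "\<alpha> a b - \<beta> a b = phi (z - w) a b" for a b
    by (simp add: linear_diff[OF linear_phi] algebra_simps)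
  have "z - w = 0"
    by (rule phi_eq_diff_alt_forms_imp_0[OF \<open>subspace P\<close> \<open>dim P = 3\<close> \<alpha>(1)
          \<open>subspace Q\<close> \<open>dim Q = 3\<close> \<beta>(1) diff])
  then have "\<alpha> = \<beta>"
    using diff by (simp add: fun_eq_iff linear_0[OF linear_phi])
  then have "\<alpha> a b = 0" for a b
    using alt_form_on_two_subspaces_eq_0[OF \<open>subspace P\<close> \<open>subspace Q\<close>
        associative_inter_dim_le_1[OF assms] \<alpha>(1)] \<beta>(1) by simp
  then have "\<omega> = contr_phi w"
    by (simp add: \<alpha>(3) contr_phi_def)
  then show "\<omega> \<in> Lambda27"
    by (auto simp: Lambda27_def)
qed

end
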